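(* Let $M$ be a topological space and $E:\mathbb{R}\to\mathcal{T}(M)$ a spectral family in the lattice $\mathcal{T}(M)$ of open subsets of $M$, with admissible domain $\mathcal{D}(E)$ and induced function $f_E:\mathcal{D}(E)\to\mathbb{R}$. Then $\mathrm{sp}(E)=\overline{\mathrm{im}\, f_E}$.
   Context: In $\mathcal{T}(M)$, $\bigvee_\alpha U_\alpha=\bigcup_\alpha U_\alpha$ and $\bigwedge_\alpha U_\alpha=\mathrm{int}\bigcap_\alpha U_\alpha$. A spectral family in $\mathcal{T}(M)$ is a map $E:\mathbb{R}\to\mathcal{T}(M)$ with $E_\lambda\subseteq E_\mu$ for $\lambda\le\mu$, $E_\lambda=\bigwedge_{\mu>\lambda}E_\mu$, $\bigwedge_\lambda E_\lambda=\emptyset$, $\bigcup_\lambda E_\lambda=M$. Its admissible domain is $\mathcal{D}(E)=\{x\in M\mid\exists\lambda: x\notin E_\lambda\}$, and the induced function is $f_E(x)=\inf\{\lambda\in\mathbb{R}\mid x\in E_\lambda\}$ for $x\in\mathcal{D}(E)$. The resolvent set $R(E)$ is the set of $\lambda\in\mathbb{R}$ such that $E$ is constant on a neighbourhood of $\lambda$, and $\mathrm{sp}(E)=\mathbb{R}\setminus R(E)$. *)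

theory Defs
  imports "HOL-Analysis.Analysis"
begin

text \<open>Spectral family in the lattice of open subsets of a topological space X
  (carrier topspace X). Meet of a family of open sets = interior of the intersection.\<close>

definition spectral_family :: "'a topology \<Rightarrow> (real \<Rightarrow> 'a set) \<Rightarrow> bool" where
  "spectral_family X E \<longleftrightarrow>
     (\<forall>l. openin X (E l)) \<and>
     (\<forall>l m. l \<le> m \<longrightarrow> E l \<subseteq> E m) \<and>
     (\<forall>l. E l = X interior_of (\<Inter>m\<in>{l<..}. E m)) \<and>
     X interior_of (\<Inter>l. E l) = {} \<and>
     (\<Union>l. E l) = topspace X"

definition admissible_domain :: "'a topology \<Rightarrow> (real \<Rightarrow> 'a set) \<Rightarrow> 'a set" where
  "admissible_domain X E = {x \<in> topspace X. \<exists>l. x \<notin> E l}"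

definition induced_function :: "(real \<Rightarrow> 'a set) \<Rightarrow> 'a \<Rightarrow> real" where
  "induced_function E x = Inf {l. x \<in> E l}"

definition resolvent_set :: "(real \<Rightarrow> 'a set) \<Rightarrow> real set" where
  "resolvent_set E = {l. \<exists>U. open U \<and> l \<in> U \<and> (\<forall>m\<in>U. \<forall>n\<in>U. E m = E n)}"

definition spectrum_sf :: "(real \<Rightarrow> 'a set) \<Rightarrow> real set" where
  "spectrum_sf E = UNIV - resolvent_set E"

end

theory Submission
  imports Defs
begin

text \<open>A point x of the admissible domain lies
  outside E l for l < f_E x and inside E l for l > f_E x, so E jumps at f_E x; conversely,
  every jump of E between a and b is witnessed by a point x with f_E x in [a, b].\<close>

lemma spectral_family_mono: "spectral_family X E \<Longrightarrow> mono E"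
  unfolding spectral_family_def mono_def by blast

lemma spectral_family_Union: "spectral_family X E \<Longrightarrow> (\<Union>l. E l) = topspace X"
  unfolding spectral_family_def by blast

lemma open_resolvent_set: "open (resolvent_set E)"
  unfolding open_subopen[of "resolvent_set E"]
proof
  fix l assume "l \<in> resolvent_set E"
  then obtain U where "open U" "l \<in> U" "\<forall>m\<in>U. \<forall>n\<in>U. E m = E n"
    unfolding resolvent_set_def by blast
  moreover from this have "U \<subseteq> resolvent_set E" unfolding resolvent_set_def by blast
  ultimately show "\<exists>T. open T \<and> l \<in> T \<and> T \<subseteq> resolvent_set E" by blast
qed

lemma closed_spectrum_sf: "closed (spectrum_sf E)"
  unfolding spectrum_sf_def by (simp add: closed_Diff open_resolvent_set)

lemma mono_family_not_mem_le:
  fixes E :: "'b::linorder \<Rightarrow> 'a set"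
  assumes "mono E" and "x \<notin> E m" and "x \<in> E l"
  shows "m \<le> l"
proof (rule ccontr)
  assume "\<not> m \<le> l"
  then have "E l \<subseteq> E m" by (intro monoD[OF assms(1)]) (simp add: not_le)
  with assms(2,3) show False by blast
qed

lemma mono_family_bdd_below:
  fixes E :: "'b::linorder \<Rightarrow> 'a set"
  assumes "mono E" and "x \<notin> E m"
  shows "bdd_below {l. x \<in> E l}"
  using mono_family_not_mem_le[OF assms] by (intro bdd_belowI) simp

lemma induced_function_le:
  assumes "mono E" and "x \<notin> E m" and "x \<in> E n"
  shows "induced_function E x \<le> n"
  unfolding induced_function_def
  using cInf_lower[OF _ mono_family_bdd_below[OF assms(1,2)]] assms(3) by blast

lemma induced_function_ge:
  assumes "mono E" and "x \<notin> E m" and "x \<in> E n"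
  shows "m \<le> induced_function E x"
  unfolding induced_function_def
  using assms(3) mono_family_not_mem_le[OF assms(1,2)] by (intro cInf_greatest) auto

lemma mem_of_induced_function_less:
  assumes "mono E" and "x \<notin> E m" and "x \<in> E n" and "induced_function E x < l"
  shows "x \<in> E l"
proof -
  have "{l. x \<in> E l} \<noteq> {}" using assms(3) by blast
  then obtain k where "x \<in> E k" "k < l"
    using assms(4) cInf_less_iff[OF _ mono_family_bdd_below[OF assms(1,2)]]
    unfolding induced_function_def by auto
  with assms(1) show ?thesis by (meson monoD less_imp_le subsetD)
qed

lemma resolvent_setE:
  assumes "l \<in> resolvent_set E"
  obtains a b where "a < l" "l < b" "E a = E b"
proof -
  obtain U where "open U" "l \<in> U" and const: "\<forall>m\<in>U. \<forall>n\<in>U. E m = E n"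
    using assms unfolding resolvent_set_def by blast
  then obtain e where "e > 0" "ball l e \<subseteq> U" using open_contains_ball by blast
  then have "l - e/2 \<in> U" "l + e/2 \<in> U" by (auto simp: dist_real_def subset_iff)
  with const have "E (l - e/2) = E (l + e/2)" by blast
  with \<open>e > 0\<close> show ?thesis by (intro that[of "l - e/2" "l + e/2"]) simp_all
qed

lemma constant_interval_subset_resolvent_set:
  assumes "mono E" and "E a = E b"
  shows "{a<..<b} \<subseteq> resolvent_set E"
proof -
  have const: "E m = E a" if "m \<in> {a<..<b}" for m
    using that assms(2) monoD[OF assms(1), of a m] monoD[OF assms(1), of m b] by auto
  show ?thesis
  proof
    fix l assume "l \<in> {a<..<b}"
    then show "l \<in> resolvent_set E"
      unfolding resolvent_set_def using const by (intro CollectI exI[of _ "{a<..<b}"]) simp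
  qed
qed

lemma induced_function_not_in_resolvent_set:
  assumes "mono E" and "x \<notin> E m" and "x \<in> E n"
  shows "induced_function E x \<notin> resolvent_set E"
proof
  assume "induced_function E x \<in> resolvent_set E"
  then obtain a b where "a < induced_function E x" "induced_function E x < b" "E a = E b"
    by (rule resolvent_setE)
  moreover have "x \<in> E b"
    using mem_of_induced_function_less[OF assms] \<open>induced_function E x < b\<close> .
  moreover have "x \<notin> E a"
    using induced_function_le[OF assms(1,2)] \<open>a < induced_function E x\<close> by fastforce
  ultimately show False by simp
qed

lemma constant_if_no_induced_value_between:
  assumes "mono E" and "E b \<subseteq> topspace X" and "a \<le> b"
    and gap: "{a..b} \<inter> induced_function E ` admissible_domain X E = {}"
  shows "E a = E b"
proof (rule ccontr)
  assume "E a \<noteq> E b"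
  with monoD[OF assms(1,3)] obtain x where "x \<in> E b" "x \<notin> E a" by blast
  then have "x \<in> admissible_domain X E"
    using assms(2) unfolding admissible_domain_def by blast
  moreover have "induced_function E x \<in> {a..b}"
    using induced_function_ge[OF assms(1) \<open>x \<notin> E a\<close> \<open>x \<in> E b\<close>]
      induced_function_le[OF assms(1) \<open>x \<notin> E a\<close> \<open>x \<in> E b\<close>] by simp
  ultimately show False using gap by blast
qed

theorem spectrum_sf_mono_family:
  assumes "mono E" and cover: "(\<Union>l. E l) = topspace X"
  shows "spectrum_sf E = closure (induced_function E ` admissible_domain X E)"
    (is "_ = closure ?im")
proof (rule equalityI)
  have "- closure ?im \<subseteq> resolvent_set E"
  proof
    fix l assume "l \<in> - closure ?im"
    then obtain e where "e > 0" and far: "\<And>y. y \<in> ?im \<Longrightarrow> e \<le> dist y l"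
      using closure_approachable[of l ?im] by (meson ComplD not_less)
    have "dist y l < e" if "y \<in> {l - e/2..l + e/2}" for y
      using that \<open>e > 0\<close> by (auto simp: dist_real_def abs_less_iff)
    then have "{l - e/2..l + e/2} \<inter> ?im = {}"
      using far by (meson disjoint_iff not_le)
    then have "E (l - e/2) = E (l + e/2)"
      using cover \<open>e > 0\<close> by (intro constant_if_no_induced_value_between[OF assms(1)]) auto
    moreover have "l \<in> {l - e/2<..<l + e/2}" using \<open>e > 0\<close> by simp
    ultimately show "l \<in> resolvent_set E"
      using constant_interval_subset_resolvent_set[OF assms(1)] by blast
  qed
  then show "spectrum_sf E \<subseteq> closure ?im" unfolding spectrum_sf_def by blast
next
  have "?im \<subseteq> spectrum_sf E"
  proof
    fix y assume "y \<in> ?im"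
    then obtain x m where "y = induced_function E x" "x \<in> topspace X" "x \<notin> E m"
      unfolding admissible_domain_def by blast
    moreover obtain n where "x \<in> E n" using cover \<open>x \<in> topspace X\<close> by blast
    ultimately show "y \<in> spectrum_sf E"
      using induced_function_not_in_resolvent_set[OF assms(1)] unfolding spectrum_sf_def by blast
  qed
  then show "closure ?im \<subseteq> spectrum_sf E"
    by (rule closure_minimal) (rule closed_spectrum_sf)
qed

theorem proposition2p30:
  fixes X :: "'a topology" and E :: "real \<Rightarrow> 'a set"
  assumes "spectral_family X E"
  shows "spectrum_sf E = closure (induced_function E ` admissible_domain X E)"
  using spectrum_sf_mono_family[OF spectral_family_mono[OF assms] spectral_family_Union[OF assms]] .

end
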